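(* Let $1\to K\to G\xrightarrow{p} Q\to 1$ be an exact sequence of groups, where $K$ is a torsion group (so $p:G\to Q$ is a surjection with kernel $K$). Then an element $g\in G$ is a genuine generalized torsion element of $G$ if and only if $p(g)$ is a genuine generalized torsion element of $Q$.
   Context: For $g,x$ in a group, $g^{x}:=xgx^{-1}$. A non-trivial element $g$ of a group $G$ is a generalized torsion element if there exist a positive integer $n$ and $x_1,\ldots,x_n\in G$ with $g^{x_1}g^{x_2}\cdots g^{x_n}=1$. A generalized torsion element is genuine if it is not a torsion element. A torsion group is a group all of whose elements have finite order. *)

theory Defs
  imports "HOL-Algebra.Algebra"
begin

definition conj_by :: "('a, 'm) monoid_scheme \<Rightarrow> 'a \<Rightarrow> 'a \<Rightarrow> 'a" where
  "conj_by G g x = x \<otimes>\<^bsub>G\<^esub> g \<otimes>\<^bsub>G\<^esub> inv\<^bsub>G\<^esub> x"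

definition conj_prod :: "('a, 'm) monoid_scheme \<Rightarrow> 'a \<Rightarrow> 'a list \<Rightarrow> 'a" where
  "conj_prod G g xs = foldr (\<lambda>x acc. conj_by G g x \<otimes>\<^bsub>G\<^esub> acc) xs \<one>\<^bsub>G\<^esub>"

definition torsion_element :: "('a, 'm) monoid_scheme \<Rightarrow> 'a \<Rightarrow> bool" where
  "torsion_element G g \<longleftrightarrow> g \<in> carrier G \<and> (\<exists>n::nat. n > 0 \<and> g [^]\<^bsub>G\<^esub> n = \<one>\<^bsub>G\<^esub>)"

definition torsion_group :: "('a, 'm) monoid_scheme \<Rightarrow> 'a set \<Rightarrow> bool" where
  "torsion_group G K \<longleftrightarrow> (\<forall>g\<in>K. torsion_element G g)"

definition generalized_torsion :: "('a, 'm) monoid_scheme \<Rightarrow> 'a \<Rightarrow> bool" where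
  "generalized_torsion G g \<longleftrightarrow> g \<in> carrier G \<and> g \<noteq> \<one>\<^bsub>G\<^esub> \<and>
     (\<exists>xs. length xs > 0 \<and> set xs \<subseteq> carrier G \<and> conj_prod G g xs = \<one>\<^bsub>G\<^esub>)"

definition genuine_generalized_torsion :: "('a, 'm) monoid_scheme \<Rightarrow> 'a \<Rightarrow> bool" where
  "genuine_generalized_torsion G g \<longleftrightarrow> generalized_torsion G g \<and> \<not> torsion_element G g"

end

theory Submission
  imports Defs
begin

text \<open>
  Since the kernel K is torsion, g has finite order iff p g does: if (p g)^n = 1 then
  g^n lies in K and so has finite order. A relation g^{x_1} ... g^{x_n} = 1 is carried
  by p to a relation for p g. Conversely, lift a relation for p g along the surjection p:
  the product c of the lifted conjugates of g lies in K, so c^m = 1 for some m > 0, and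
  c^m is again a product of conjugates of g (the list of conjugators repeated m times).
\<close>

lemma conj_prod_Nil [simp]: "conj_prod G g [] = \<one>\<^bsub>G\<^esub>"
  by (simp add: conj_prod_def)

lemma conj_prod_Cons [simp]:
  "conj_prod G g (x # xs) = conj_by G g x \<otimes>\<^bsub>G\<^esub> conj_prod G g xs"
  by (simp add: conj_prod_def)

context group
begin

lemma conj_by_closed [intro, simp]:
  "g \<in> carrier G \<Longrightarrow> x \<in> carrier G \<Longrightarrow> conj_by G g x \<in> carrier G"
  by (simp add: conj_by_def)

lemma conj_prod_closed [intro, simp]:
  assumes "g \<in> carrier G" "set xs \<subseteq> carrier G"
  shows "conj_prod G g xs \<in> carrier G"
  using assms(2) by (induction xs) (simp_all add: assms(1))

lemma conj_prod_append:
  assumes "g \<in> carrier G" "set xs \<subseteq> carrier G" "set ys \<subseteq> carrier G"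
  shows "conj_prod G g (xs @ ys) = conj_prod G g xs \<otimes> conj_prod G g ys"
  using assms(2) by (induction xs) (simp_all add: assms(1,3) m_assoc)

lemma conj_prod_concat_replicate:
  assumes "g \<in> carrier G" "set xs \<subseteq> carrier G"
  shows "conj_prod G g (concat (replicate m xs)) = conj_prod G g xs [^] m"
proof (induction m)
  case 0
  then show ?case by simp
next
  case (Suc m)
  have "set (concat (replicate m xs)) \<subseteq> carrier G" using assms(2) by auto
  then show ?case
    using Suc assms by (simp add: conj_prod_append nat_pow_Suc2[symmetric] del: nat_pow_Suc)
qed

lemma not_torsion_imp_ne_one:
  "\<not> torsion_element G g \<Longrightarrow> g \<in> carrier G \<Longrightarrow> g \<noteq> \<one>"
  by (auto simp: torsion_element_def intro: exI[of _ 1])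

lemma genuine_generalized_torsion_iff:
  "genuine_generalized_torsion G g \<longleftrightarrow> g \<in> carrier G \<and> \<not> torsion_element G g \<and>
     (\<exists>xs. length xs > 0 \<and> set xs \<subseteq> carrier G \<and> conj_prod G g xs = \<one>)"
  using not_torsion_imp_ne_one
  by (auto simp: genuine_generalized_torsion_def generalized_torsion_def)

end

context group_hom
begin

lemma conj_prod_image:
  assumes "g \<in> carrier G" "set xs \<subseteq> carrier G"
  shows "h (conj_prod G g xs) = conj_prod H (h g) (map h xs)"
  using assms(2) by (induction xs) (simp_all add: conj_by_def assms(1))

lemma torsion_element_image:
  assumes "torsion_element G g"
  shows "torsion_element H (h g)"
  using assms by (auto simp: torsion_element_def hom_nat_pow[symmetric])

lemma torsion_element_of_image:
  assumes "torsion_group G (kernel G H h)" "g \<in> carrier G" "torsion_element H (h g)"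
  shows "torsion_element G g"
proof -
  obtain n :: nat where n: "n > 0" "h g [^]\<^bsub>H\<^esub> n = \<one>\<^bsub>H\<^esub>"
    using assms(3) by (auto simp: torsion_element_def)
  then have "g [^] n \<in> kernel G H h"
    using assms(2) by (simp add: kernel_def hom_nat_pow)
  then obtain m :: nat where m: "m > 0" "(g [^] n) [^] m = \<one>"
    using assms(1) by (auto simp: torsion_group_def torsion_element_def)
  then have "g [^] (n * m) = \<one>"
    using assms(2) by (simp add: G.nat_pow_pow)
  then show ?thesis
    using n(1) m(1) assms(2) unfolding torsion_element_def by (intro conjI exI[of _ "n * m"]) auto
qed

lemma conj_relation_image:
  assumes "g \<in> carrier G" "length xs > 0" "set xs \<subseteq> carrier G" "conj_prod G g xs = \<one>"
  shows "length (map h xs) > 0 \<and> set (map h xs) \<subseteq> carrier H \<and>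
    conj_prod H (h g) (map h xs) = \<one>\<^bsub>H\<^esub>"
  using assms conj_prod_image[OF assms(1,3)] by auto

lemma conj_relation_lift:
  assumes "h ` carrier G = carrier H" "torsion_group G (kernel G H h)" "g \<in> carrier G"
    and "length ys > 0" "set ys \<subseteq> carrier H" "conj_prod H (h g) ys = \<one>\<^bsub>H\<^esub>"
  obtains xs where "length xs > 0" "set xs \<subseteq> carrier G" "conj_prod G g xs = \<one>"
proof -
  define ls where "ls = map (inv_into (carrier G) h) ys"
  have ls_carrier: "set ls \<subseteq> carrier G"
    using assms(1,5) by (auto simp: ls_def intro!: inv_into_into)
  have "map h ls = ys"
    using assms(1,5) by (auto simp: ls_def f_inv_into_f intro!: map_idI)
  then have "conj_prod G g ls \<in> kernel G H h"
    using assms(3,6) ls_carrier by (simp add: kernel_def conj_prod_image)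
  then obtain m :: nat where m: "m > 0" "conj_prod G g ls [^] m = \<one>"
    using assms(2) by (auto simp: torsion_group_def torsion_element_def)
  show ?thesis
  proof
    show "length (concat (replicate m ls)) > 0"
      using m(1) assms(4) by (simp add: ls_def length_concat sum_list_replicate)
    show "set (concat (replicate m ls)) \<subseteq> carrier G"
      using ls_carrier by auto
    show "conj_prod G g (concat (replicate m ls)) = \<one>"
      using m(2) assms(3) ls_carrier by (simp add: G.conj_prod_concat_replicate)
  qed
qed

end

theorem theorem1p3:
  fixes G :: "('a, 'm) monoid_scheme" and Q :: "('b, 'n) monoid_scheme" and p :: "'a \<Rightarrow> 'b"
  assumes "group G" and "group Q"
    and "p \<in> hom G Q" and "p ` carrier G = carrier Q"
    and "torsion_group G (kernel G Q p)"
    and "g \<in> carrier G"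
  shows "genuine_generalized_torsion G g \<longleftrightarrow> genuine_generalized_torsion Q (p g)"
proof -
  interpret group_hom G Q p
    using assms(1-3) by (simp add: group_hom_def group_hom_axioms_def)
  have torsion_iff: "torsion_element G g \<longleftrightarrow> torsion_element Q (p g)"
    using torsion_element_image torsion_element_of_image[OF assms(5,6)] by blast
  have relation_iff:
    "(\<exists>xs. length xs > 0 \<and> set xs \<subseteq> carrier G \<and> conj_prod G g xs = \<one>\<^bsub>G\<^esub>) \<longleftrightarrow>
     (\<exists>ys. length ys > 0 \<and> set ys \<subseteq> carrier Q \<and> conj_prod Q (p g) ys = \<one>\<^bsub>Q\<^esub>)"
    using conj_relation_image[OF assms(6)] conj_relation_lift[OF assms(4-6)] by metis
  show ?thesis
    using torsion_iff relation_iff assms(6)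
    by (simp add: G.genuine_generalized_torsion_iff H.genuine_generalized_torsion_iff)
qed

end
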